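(* Let $b\ge 2$ and $n\ge 0$ be integers. Then $$g(T_b(n)) = \frac{(b^{3}+b^{2}-b-1)\,b^{2n} + \{(n-1)(b^{2}-1)-2\}\,b^{n} - 2b + 4}{2}.$$
   Context: For integers $b\ge 2$, $n\ge 0$ and $i\ge 0$ put $s_i=(b+1)b^{n+i}-1$, and let $T_b(n)=\langle\{s_i : i\in\mathbb{N}\}\rangle$ be the submonoid of $(\mathbb{N},+)$ generated by these numbers (a numerical semigroup). For a numerical semigroup $S$, the genus $g(S)$ is the cardinality of $\mathbb{N}\setminus S$. *)

theory Defs
  imports Complex_Main
begin

inductive_set submonoid_gen :: "nat set \<Rightarrow> nat set" for A :: "nat set" where
  zero: "0 \<in> submonoid_gen A"
| add: "a \<in> A \<Longrightarrow> x \<in> submonoid_gen A \<Longrightarrow> a + x \<in> submonoid_gen A"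

definition s_gen :: "nat \<Rightarrow> nat \<Rightarrow> nat \<Rightarrow> nat" where
  "s_gen b n i = (b + 1) * b ^ (n + i) - 1"

definition T :: "nat \<Rightarrow> nat \<Rightarrow> nat set" where
  "T b n = submonoid_gen (range (s_gen b n))"

definition genus :: "nat set \<Rightarrow> nat" where
  "genus S = card (UNIV - S)"

end

theory Submission
  imports Defs "HOL-Computational_Algebra.Factorial_Ring" "HOL-Number_Theory.Cong"
begin

text \<open>Let \<open>s\<^sub>0 = (b + 1) b\<^sup>n - 1\<close> be the smallest generator and
  \<open>\<lambda>(N) = \<Sum>\<^sub>k\<^sub>\<ge>\<^sub>1 \<lfloor>N / b\<^sup>k\<rfloor>\<close>. Then \<open>s\<^sub>i = s\<^sub>0 b\<^sup>i + (b - 1) \<lambda>(b\<^sup>i)\<close>, and since \<open>\<lambda>\<close> is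
  superadditive, with equality when the lowest nonzero digit is split off, \<open>T\<^sub>b(n)\<close> consists
  exactly of the numbers \<open>s\<^sub>0 N + (b - 1) j\<close> with \<open>j \<le> \<lambda>(N)\<close>. As \<open>b - 1\<close> is coprime to \<open>s\<^sub>0\<close>,
  the \<open>j < s\<^sub>0\<close> index the residue classes modulo \<open>s\<^sub>0\<close>, the least element of class \<open>j\<close> is
  \<open>s\<^sub>0 \<mu>(j) + (b - 1) j\<close> with \<open>\<mu>(j) = min {N. j \<le> \<lambda>(N)}\<close>, and counting gaps class by class gives
  \<open>g = \<Sum>\<^sub>j \<mu>(j) + \<Sum>\<^sub>j \<lfloor>(b - 1) j / s\<^sub>0\<rfloor>\<close>. The second sum is \<open>(s\<^sub>0 - 1)(b - 2)/2\<close> by pairing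
  \<open>j\<close> with \<open>s\<^sub>0 - j\<close>; the first is \<open>\<Sum>\<^sub>N\<^sub><\<^sub>K (s\<^sub>0 - 1 - \<lambda>(N))\<close>, where \<open>K = (b\<^sup>2 - 1) b\<^sup>n\<close> is the
  point at which \<open>\<lambda>\<close> reaches \<open>s\<^sub>0 - 1\<close>, and \<open>\<Sum>\<^sub>N\<^sub><\<^sub>K \<lambda>(N)\<close> follows by induction on \<open>n\<close> from
  \<open>\<lambda>(b N + r) = N + \<lambda>(N)\<close> for \<open>r < b\<close>.\<close>

lemma submonoid_gen_add:
  "x \<in> submonoid_gen A \<Longrightarrow> y \<in> submonoid_gen A \<Longrightarrow> x + y \<in> submonoid_gen A"
  by (induction x rule: submonoid_gen.induct) (auto simp: add.assoc intro: submonoid_gen.add)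

lemma submonoid_gen_generator: "a \<in> A \<Longrightarrow> a \<in> submonoid_gen A"
  using submonoid_gen.add[OF _ submonoid_gen.zero] by simp

lemma less_iff_div_less_if_mod_eq:
  fixes x y m :: nat
  assumes "x mod m = y mod m"
  shows "x < y \<longleftrightarrow> x div m < y div m"
proof
  assume "x < y"
  moreover have "x div m \<noteq> y div m \<or> x = y"
    using assms by (metis div_mult_mod_eq)
  ultimately show "x div m < y div m"
    by (simp add: div_le_mono le_neq_implies_less)
next
  assume "x div m < y div m"
  then show "x < y"
    by (meson div_le_mono not_le)
qed

lemma card_gaps_residue_classes:
  fixes S :: "nat set" and w :: "'a \<Rightarrow> nat"
  assumes "m > 0"
    and bij: "bij_betw (\<lambda>j. w j mod m) J {..<m}"
    and mem: "\<And>j x. j \<in> J \<Longrightarrow> x mod m = w j mod m \<Longrightarrow> x \<in> S \<longleftrightarrow> w j \<le> x"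
  shows "card (UNIV - S) = (\<Sum>j\<in>J. w j div m)"
proof -
  define \<phi> where "\<phi> = (\<lambda>(j, t). m * t + w j mod m)"
  have "UNIV - S = \<phi> ` (SIGMA j:J. {..<w j div m})"
  proof (intro equalityI subsetI)
    fix x assume "x \<in> UNIV - S"
    from \<open>m > 0\<close> have "x mod m \<in> (\<lambda>j. w j mod m) ` J"
      using bij_betw_imp_surj_on[OF bij] by simp
    then obtain j where j: "j \<in> J" "x mod m = w j mod m" by auto
    with \<open>x \<in> UNIV - S\<close> mem have "x div m < w j div m"
      using less_iff_div_less_if_mod_eq by (metis DiffD2 not_le)
    moreover have "x = m * (x div m) + w j mod m"
      using j(2) by (metis mult_div_mod_eq)
    ultimately show "x \<in> \<phi> ` (SIGMA j:J. {..<w j div m})"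
      using j(1) unfolding \<phi>_def by (intro image_eqI[of _ _ "(j, x div m)"]) auto
  next
    fix x assume "x \<in> \<phi> ` (SIGMA j:J. {..<w j div m})"
    then obtain j t where j: "j \<in> J" "t < w j div m" and x: "x = m * t + w j mod m"
      unfolding \<phi>_def by auto
    from x \<open>m > 0\<close> have "x mod m = w j mod m" "x div m = t"
      by simp_all
    with j show "x \<in> UNIV - S"
      using mem less_iff_div_less_if_mod_eq[of x m "w j"] by auto
  qed
  moreover have "inj_on \<phi> (SIGMA j:J. {..<w j div m})"
  proof (rule inj_onI, clarsimp simp: \<phi>_def)
    fix j t j' t'
    assume "j \<in> J" "j' \<in> J" and eq: "m * t + w j mod m = m * t' + w j' mod m"
    then have "w j mod m = w j' mod m"
      by (metis mod_mod_trivial mod_mult_self3 mult.commute)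
    with \<open>j \<in> J\<close> \<open>j' \<in> J\<close> have "j = j'"
      using bij by (auto dest: bij_betw_imp_inj_on inj_onD)
    with eq \<open>m > 0\<close> show "j = j' \<and> t = t'" by simp
  qed
  moreover have "finite J"
    using bij bij_betw_finite by blast
  ultimately show ?thesis
    by (simp add: card_image card_SigmaI)
qed

lemma div_add_div_complement:
  fixes a c m :: nat
  assumes "\<not> m dvd a" "a \<le> c * m"
  shows "a div m + (c * m - a) div m = c - 1"
proof -
  define q r where "q = a div m" and "r = a mod m"
  from assms have "m > 0"
    by (cases m) auto
  then have "0 < r" "r < m"
    using assms(1) unfolding r_def by (auto simp: mod_eq_0_iff_dvd intro: Nat.gr0I)
  have a: "a = q * m + r"
    unfolding q_def r_def by simp
  with assms(2) \<open>0 < r\<close> have "q * m < c * m"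
    by linarith
  then have "q < c"
    by simp
  then obtain d where d: "c = Suc (q + d)"
    using less_imp_Suc_add by blast
  have "c * m - a = m * d + (m - r)"
    using a \<open>r < m\<close> unfolding d by (simp add: algebra_simps)
  then have "(c * m - a) div m = d"
    using \<open>0 < r\<close> \<open>r < m\<close> by (intro div_nat_eqI) simp_all
  then show ?thesis
    unfolding q_def[symmetric] d by simp
qed

lemma sum_div_coprime:
  fixes c m :: nat
  assumes "coprime c m"
  shows "2 * (\<Sum>j<m. c * j div m) = (m - 1) * (c - 1)"
proof -
  define g where "g j = c * j div m" for j
  have pair: "g j + g (m - j) = c - 1" if "j \<in> {1..<m}" for j
  proof -
    from assms have "coprime m c"
      by (simp add: coprime_commute)
    with that have "\<not> m dvd c * j"
      by (simp add: coprime_dvd_mult_right_iff nat_dvd_not_less)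
    then show ?thesis
      using div_add_div_complement[of m "c * j" c] that
      by (simp add: g_def diff_mult_distrib2 mult.commute)
  qed
  have "(\<Sum>j<m. g j) = (\<Sum>j\<in>{1..<m}. g j)"
    by (rule sum.mono_neutral_right) (auto simp: g_def Suc_le_eq)
  moreover have "(\<Sum>j\<in>{1..<m}. g j) = (\<Sum>j\<in>{1..<m}. g (m - j))"
    by (rule sum.reindex_bij_witness[of _ "\<lambda>j. m - j" "\<lambda>j. m - j"]) auto
  ultimately have "2 * (\<Sum>j<m. g j) = (\<Sum>j\<in>{1..<m}. g j + g (m - j))"
    by (simp add: sum.distrib)
  also have "\<dots> = (m - 1) * (c - 1)"
    using pair by simp
  finally show ?thesis
    unfolding g_def .
qed

lemma sum_Least_le_mono:
  fixes h :: "nat \<Rightarrow> nat"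
  assumes "mono h" "M \<le> Suc (h K)"
  shows "(\<Sum>j<M. LEAST N. j \<le> h N) = (\<Sum>N<K. M - Suc (h N))"
proof -
  have Least_le_iff: "(LEAST N. j \<le> h N) \<le> N \<longleftrightarrow> j \<le> h N" if "j < M" for j N
  proof
    from that assms(2) have "j \<le> h K"
      by simp
    then have "j \<le> h (LEAST N. j \<le> h N)"
      by (rule LeastI)
    then show "(LEAST N. j \<le> h N) \<le> N \<Longrightarrow> j \<le> h N"
      using monoD[OF assms(1)] le_trans by blast
  qed (rule Least_le)
  have "(\<Sum>j<M. LEAST N. j \<le> h N) = (\<Sum>j<M. \<Sum>N<K. of_bool (h N < j) :: nat)"
  proof (rule sum.cong)
    fix j assume "j \<in> {..<M}"
    then have j: "j < M" by simp
    define L where "L = (LEAST N. j \<le> h N)"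
    have "L \<le> K"
      using Least_le_iff[OF j, of K] j assms(2) unfolding L_def by simp
    then have "N < K \<and> h N < j \<longleftrightarrow> N < L" for N
      using Least_le_iff[OF j, of N] unfolding L_def[symmetric] by linarith
    then have "{..<K} \<inter> {N. h N < j} = {..<L}"
      by blast
    then show "(LEAST N. j \<le> h N) = (\<Sum>N<K. of_bool (h N < j) :: nat)"
      unfolding L_def by simp
  qed simp
  also have "\<dots> = (\<Sum>N<K. \<Sum>j<M. of_bool (h N < j) :: nat)"
    by (rule sum.swap)
  also have "\<dots> = (\<Sum>N<K. M - Suc (h N))"
  proof (rule sum.cong)
    fix N
    have "{..<M} \<inter> {j. h N < j} = {Suc (h N)..<M}" by auto
    then show "(\<Sum>j<M. of_bool (h N < j) :: nat) = M - Suc (h N)" by simp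
  qed simp
  finally show ?thesis .
qed

lemma bij_betw_mult_mod_coprime:
  fixes c m :: nat
  assumes "coprime c m"
  shows "bij_betw (\<lambda>j. c * j mod m) {..<m} {..<m}"
proof (cases "m = 0")
  case False
  have "inj_on (\<lambda>j. c * j mod m) {..<m}"
  proof (rule inj_onI)
    fix x y assume "x \<in> {..<m}" "y \<in> {..<m}" "c * x mod m = c * y mod m"
    then show "x = y"
      using cong_mult_lcancel_nat[OF assms] by (simp add: cong_def)
  qed
  moreover have "(\<lambda>j. c * j mod m) ` {..<m} \<subseteq> {..<m}"
    using False by auto
  ultimately show ?thesis
    by (simp add: bij_betw_def endo_inj_surj)
qed (simp add: bij_betw_def)

lemma submonoid_gen_progression_add:
  fixes p q :: nat
  assumes "\<forall>j\<le>k. p * A + q * j \<in> submonoid_gen G" "\<forall>j\<le>k'. p * A' + q * j \<in> submonoid_gen G"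
  shows "\<forall>j\<le>k + k'. p * (A + A') + q * j \<in> submonoid_gen G"
proof (intro allI impI)
  fix j assume "j \<le> k + k'"
  define j\<^sub>1 j\<^sub>2 where "j\<^sub>1 = min j k" and "j\<^sub>2 = j - min j k"
  have "j\<^sub>1 \<le> k" "j\<^sub>2 \<le> k'" "j = j\<^sub>1 + j\<^sub>2"
    using \<open>j \<le> k + k'\<close> unfolding j\<^sub>1_def j\<^sub>2_def by auto
  then have "(p * A + q * j\<^sub>1) + (p * A' + q * j\<^sub>2) \<in> submonoid_gen G"
    using assms by (blast intro: submonoid_gen_add)
  with \<open>j = j\<^sub>1 + j\<^sub>2\<close> show "p * (A + A') + q * j \<in> submonoid_gen G"
    by (simp add: algebra_simps)
qed

lemma submonoid_gen_progression_mult: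
  fixes p q :: nat
  assumes "\<forall>j\<le>k. p * A + q * j \<in> submonoid_gen G"
  shows "\<forall>j\<le>c * k. p * (c * A) + q * j \<in> submonoid_gen G"
proof (induction c)
  case 0
  then show ?case
    by (simp add: submonoid_gen.zero)
next
  case (Suc c)
  then show ?case
    using submonoid_gen_progression_add[OF assms Suc] by (simp add: add.commute)
qed

text \<open>The function \<open>\<lambda>\<close>; for \<open>b < 2\<close>, where the recursion would not terminate, it is the
  junk value \<open>0\<close>.\<close>
function legendre_sum :: "nat \<Rightarrow> nat \<Rightarrow> nat" where
  "legendre_sum b N = (if b < 2 \<or> N = 0 then 0 else N div b + legendre_sum b (N div b))"
  by auto
termination
  by (relation "measure snd") auto

declare legendre_sum.simps [simp del]

lemma legendre_sum_0 [simp]: "legendre_sum b 0 = 0"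
  by (simp add: legendre_sum.simps)

lemma legendre_sum_rec: "2 \<le> b \<Longrightarrow> legendre_sum b N = N div b + legendre_sum b (N div b)"
  by (cases "N = 0") (simp_all add: legendre_sum.simps[of b N])

lemma legendre_sum_mult_base: "2 \<le> b \<Longrightarrow> legendre_sum b (b * Q) = Q + legendre_sum b Q"
  using legendre_sum_rec[of b "b * Q"] by simp

lemma legendre_sum_less_base: "2 \<le> b \<Longrightarrow> N < b \<Longrightarrow> legendre_sum b N = 0"
  using legendre_sum_rec[of b N] by simp

lemma mono_legendre_sum:
  assumes "2 \<le> b"
  shows "mono (legendre_sum b)"
proof (rule monoI)
  show "legendre_sum b N \<le> legendre_sum b N'" if "N \<le> N'" for N N'
    using that
  proof (induction N' arbitrary: N rule: less_induct)
    case (less N')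
    show ?case
    proof (cases "N' = 0")
      case False
      with assms less.prems have "N' div b < N'" "N div b \<le> N' div b"
        by (simp_all add: div_le_mono)
      then have "legendre_sum b (N div b) \<le> legendre_sum b (N' div b)"
        using less.IH by blast
      with \<open>N div b \<le> N' div b\<close> show ?thesis
        using legendre_sum_rec[OF assms, of N] legendre_sum_rec[OF assms, of N'] by linarith
    qed (use less.prems in simp)
  qed
qed

lemma legendre_sum_superadditive:
  assumes "2 \<le> b"
  shows "legendre_sum b N + legendre_sum b N' \<le> legendre_sum b (N + N')"
proof (induction N arbitrary: N' rule: less_induct)
  case (less N)
  show ?case
  proof (cases "N = 0")
    case False
    with assms have "N div b < N"
      by simp
    have "N div b + N' div b \<le> (N + N') div b"
      using div_add1_eq[of N N' b] by linarith
    then have "legendre_sum b (N div b) + legendre_sum b (N' div b) \<le> legendre_sum b ((N + N') div b)"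
      using less.IH[OF \<open>N div b < N\<close>, of "N' div b"] mono_legendre_sum[OF assms]
      by (meson le_trans monoD)
    with \<open>N div b + N' div b \<le> (N + N') div b\<close> show ?thesis
      using legendre_sum_rec[OF assms, of N] legendre_sum_rec[OF assms, of N']
        legendre_sum_rec[OF assms, of "N + N'"] by linarith
  qed simp
qed

lemma diff_mult_legendre_sum_power:
  assumes "2 \<le> b"
  shows "(b - 1) * legendre_sum b (b ^ i) = b ^ i - 1"
proof (induction i)
  case (Suc i)
  obtain c where c: "b = Suc c"
    using assms by (cases b) auto
  have "b ^ i \<ge> 1"
    using assms by simp
  with Suc show ?case
    using legendre_sum_mult_base[OF assms, of "b ^ i"] unfolding c by (simp add: algebra_simps)
qed (use assms legendre_sum_less_base in simp)

lemma legendre_sum_power_Suc: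
  assumes "2 \<le> b"
  shows "legendre_sum b (b ^ Suc i) = b * legendre_sum b (b ^ i) + 1"
proof -
  obtain c where c: "b = Suc c"
    using assms by (cases b) auto
  have "b ^ i \<ge> 1"
    using assms by simp
  then show ?thesis
    using legendre_sum_mult_base[OF assms, of "b ^ i"] diff_mult_legendre_sum_power[OF assms, of i]
    unfolding c by simp
qed

lemma legendre_sum_no_carry:
  assumes "2 \<le> b" "\<not> b dvd u"
  shows "legendre_sum b (b ^ i * u) = legendre_sum b (b ^ i * (u - 1)) + legendre_sum b (b ^ i)"
proof (induction i)
  case 0
  from assms have "u mod b \<noteq> 0" "u mod b < b"
    by (simp_all add: mod_eq_0_iff_dvd)
  then have "(u - 1) div b = u div b"
    using mult_div_mod_eq[of b u] by (intro div_nat_eqI; simp only: mult_Suc_right; linarith)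
  then show ?case
    using legendre_sum_rec[OF assms(1), of u] legendre_sum_rec[OF assms(1), of "u - 1"]
      legendre_sum_less_base[OF assms(1), of 1] assms(1) by simp
next
  case (Suc i)
  have "u \<ge> 1"
    using assms(2) by (cases u) auto
  then have "b ^ i * u = b ^ i * (u - 1) + b ^ i"
    by (simp add: algebra_simps)
  with Suc show ?case
    using legendre_sum_mult_base[OF assms(1)] by (simp add: mult.assoc)
qed

lemma s_gen_eq_s_gen_0:
  assumes "2 \<le> b"
  shows "s_gen b n i = s_gen b n 0 * b ^ i + (b - 1) * legendre_sum b (b ^ i)"
proof -
  have "(b + 1) * b ^ n \<noteq> 0" "b ^ i \<noteq> 0"
    using assms by simp_all
  then obtain x y where x: "(b + 1) * b ^ n = Suc x" and y: "b ^ i = Suc y"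
    by (meson not0_implies_Suc)
  have "s_gen b n i = Suc x * Suc y - 1"
    unfolding s_gen_def power_add mult.assoc[symmetric] x y ..
  moreover have "s_gen b n 0 = x"
    unfolding s_gen_def using x by simp
  moreover have "(b - 1) * legendre_sum b (b ^ i) = y"
    using diff_mult_legendre_sum_power[OF assms, of i] y by simp
  ultimately show ?thesis
    by (simp add: y)
qed

lemma coprime_pred_base_s_gen:
  assumes "2 \<le> b"
  shows "coprime (b - 1) (s_gen b n 0)"
proof -
  obtain c where c: "b = Suc c"
    using assms by (cases b) auto
  have "b ^ n \<noteq> 0"
    using assms by simp
  then obtain p where p: "b ^ n = Suc p"
    by (meson not0_implies_Suc)
  have "s_gen b n 0 = (b - 1) * ((b + 1) * legendre_sum b (b ^ n) + 1) + 1"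
    using diff_mult_legendre_sum_power[OF assms, of n]
    unfolding s_gen_def by (simp add: p algebra_simps, simp add: c algebra_simps)
  then show ?thesis
    by (metis coprime_add_one_right coprime_mult_left_iff)
qed

lemma mem_T_imp_progression:
  assumes "2 \<le> b" "x \<in> T b n"
  shows "\<exists>N j. j \<le> legendre_sum b N \<and> x = s_gen b n 0 * N + (b - 1) * j"
  using assms(2) unfolding T_def
proof (induction x rule: submonoid_gen.induct)
  case zero
  show ?case by auto
next
  case (add a x)
  then obtain i N j where a: "a = s_gen b n i" and j: "j \<le> legendre_sum b N"
    and x: "x = s_gen b n 0 * N + (b - 1) * j"
    by auto
  have "j + legendre_sum b (b ^ i) \<le> legendre_sum b (N + b ^ i)"
    using j legendre_sum_superadditive[OF assms(1), of N "b ^ i"] by linarith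
  moreover have "a + x = s_gen b n 0 * (N + b ^ i) + (b - 1) * (j + legendre_sum b (b ^ i))"
    unfolding a x s_gen_eq_s_gen_0[OF assms(1), of n i] by (simp add: algebra_simps)
  ultimately show ?case
    by blast
qed

lemma T_power_progression:
  assumes "2 \<le> b"
  shows "\<forall>j\<le>legendre_sum b (b ^ i). s_gen b n 0 * b ^ i + (b - 1) * j \<in> T b n"
proof (induction i)
  case 0
  show ?case
    using assms legendre_sum_less_base[OF assms, of 1]
    by (auto simp: T_def intro: submonoid_gen_generator)
next
  case (Suc i)
  show ?case
  proof (intro allI impI)
    fix j assume j: "j \<le> legendre_sum b (b ^ Suc i)"
    show "s_gen b n 0 * b ^ Suc i + (b - 1) * j \<in> T b n"
    proof (cases "j = legendre_sum b (b ^ Suc i)")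
      case True
      have "s_gen b n (Suc i) \<in> T b n"
        unfolding T_def by (rule submonoid_gen_generator) simp
      with True show ?thesis
        using s_gen_eq_s_gen_0[OF assms, of n "Suc i"] by simp
    next
      case False
      with j have "j \<le> b * legendre_sum b (b ^ i)"
        using legendre_sum_power_Suc[OF assms, of i] by simp
      then show ?thesis
        using submonoid_gen_progression_mult[OF Suc[unfolded T_def], of b] by (simp add: T_def)
    qed
  qed
qed

lemma T_progression:
  assumes "2 \<le> b"
  shows "\<forall>j\<le>legendre_sum b N. s_gen b n 0 * N + (b - 1) * j \<in> T b n"
proof (induction N rule: less_induct)
  case (less N)
  show ?case
  proof (cases "N = 0")
    case True
    then show ?thesis
      by (simp add: T_def submonoid_gen.zero)
  next
    case False
    have "\<not> is_unit b"
      using assms by simp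
    with False obtain u where u: "N = b ^ multiplicity b N * u" "\<not> b dvd u"
      using multiplicity_decompose' by blast
    define i where "i = multiplicity b N"
    from u(2) obtain u' where "u = Suc u'"
      by (cases u) auto
    define N' where "N' = b ^ i * (u - 1)"
    have N: "N = N' + b ^ i"
      using u(1) unfolding N'_def i_def \<open>u = Suc u'\<close> by simp
    then have "N' < N"
      using assms by simp
    have "legendre_sum b N = legendre_sum b N' + legendre_sum b (b ^ i)"
      using legendre_sum_no_carry[OF assms u(2), of i] u(1) unfolding N'_def i_def by simp
    then show ?thesis
      using submonoid_gen_progression_add[OF less.IH[OF \<open>N' < N\<close>, unfolded T_def]
          T_power_progression[OF assms, of i n, unfolded T_def]]
      unfolding N T_def by simp
  qed
qed

lemma mem_T_iff_progression:
  assumes "2 \<le> b"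
  shows "x \<in> T b n \<longleftrightarrow> (\<exists>N j. j \<le> legendre_sum b N \<and> x = s_gen b n 0 * N + (b - 1) * j)"
  using mem_T_imp_progression[OF assms] T_progression[OF assms] by blast

lemma s_gen_ge_2:
  assumes "2 \<le> b"
  shows "2 \<le> s_gen b n 0"
proof -
  have "3 * 1 \<le> (b + 1) * b ^ n"
    using assms by (intro mult_mono) simp_all
  then show ?thesis
    unfolding s_gen_def by simp
qed

lemma mem_T_iff_ge_Apery:
  assumes "2 \<le> b" "j < s_gen b n 0" "x mod s_gen b n 0 = (b - 1) * j mod s_gen b n 0"
  shows "x \<in> T b n \<longleftrightarrow> s_gen b n 0 * (LEAST N. j \<le> legendre_sum b N) + (b - 1) * j \<le> x"
proof -
  define M L where "M = s_gen b n 0" and "L = (LEAST N. j \<le> legendre_sum b N)"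
  have "j \<le> legendre_sum b (b * j)"
    using legendre_sum_mult_base[OF assms(1)] by simp
  then have "j \<le> legendre_sum b L"
    unfolding L_def by (rule LeastI)
  show ?thesis
    unfolding M_def[symmetric] L_def[symmetric]
  proof
    assume "x \<in> T b n"
    then obtain N j' where j': "j' \<le> legendre_sum b N" and x: "x = M * N + (b - 1) * j'"
      using mem_T_iff_progression[OF assms(1)] unfolding M_def by blast
    from x assms(3) have "(b - 1) * j' mod M = (b - 1) * j mod M"
      unfolding M_def[symmetric] by simp
    then have "j' mod M = j"
      using cong_mult_lcancel_nat[OF coprime_pred_base_s_gen[OF assms(1)]] assms(2)
      unfolding M_def cong_def by simp
    then have e: "j' = j + M * (j' div M)"
      using mult_div_mod_eq[of M j'] by simp
    with j' have "L \<le> N"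
      unfolding L_def by (intro Least_le) simp
    then have "M * L \<le> M * N"
      by simp
    moreover have "x = M * N + (b - 1) * j + (b - 1) * (M * (j' div M))"
      unfolding x by (subst e) (simp add: distrib_left)
    ultimately show "M * L + (b - 1) * j \<le> x"
      by linarith
  next
    assume le: "M * L + (b - 1) * j \<le> x"
    moreover have "x mod M = (M * L + (b - 1) * j) mod M"
      using assms(3) unfolding M_def by simp
    ultimately have "M dvd x - (M * L + (b - 1) * j)"
      using mod_eq_dvd_iff_nat by blast
    then obtain t where "x - (M * L + (b - 1) * j) = M * t" ..
    with le have "x = M * (L + t) + (b - 1) * j"
      by (simp add: algebra_simps)
    moreover have "j \<le> legendre_sum b (L + t)"
      using \<open>j \<le> legendre_sum b L\<close> monoD[OF mono_legendre_sum[OF assms(1)], of L "L + t"]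
      by simp
    ultimately show "x \<in> T b n"
      using mem_T_iff_progression[OF assms(1)] unfolding M_def by blast
  qed
qed

lemma genus_T_eq_sum:
  assumes "2 \<le> b"
  shows "genus (T b n) = (\<Sum>j<s_gen b n 0. LEAST N. j \<le> legendre_sum b N)
    + (\<Sum>j<s_gen b n 0. (b - 1) * j div s_gen b n 0)"
proof -
  define M where "M = s_gen b n 0"
  define w where "w j = M * (LEAST N. j \<le> legendre_sum b N) + (b - 1) * j" for j
  have "M > 0"
    using s_gen_ge_2[OF assms, of n] unfolding M_def by simp
  have "bij_betw (\<lambda>j. w j mod M) {..<M} {..<M}"
    using bij_betw_mult_mod_coprime[OF coprime_pred_base_s_gen[OF assms]]
    unfolding w_def M_def by simp
  moreover have "x \<in> T b n \<longleftrightarrow> w j \<le> x" if "j \<in> {..<M}" "x mod M = w j mod M" for j x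
    using mem_T_iff_ge_Apery[OF assms, of j n x] that unfolding w_def M_def by simp
  ultimately have "card (UNIV - T b n) = (\<Sum>j<M. w j div M)"
    by (rule card_gaps_residue_classes[OF \<open>M > 0\<close>])
  then show ?thesis
    unfolding genus_def w_def M_def using \<open>M > 0\<close> by (simp add: sum.distrib)
qed

lemma Suc_legendre_sum_eq_s_gen_0:
  assumes "2 \<le> b"
  shows "Suc (legendre_sum b ((b * b - 1) * b ^ n)) = s_gen b n 0"
proof (induction n)
  case 0
  have "(b * b - 1) div b = b - 1"
    using assms by (intro div_nat_eqI) (simp_all add: diff_mult_distrib2)
  then show ?case
    using legendre_sum_rec[OF assms, of "b * b - 1"] legendre_sum_less_base[OF assms, of "b - 1"] assms
    by (simp add: s_gen_def)
next
  case (Suc n)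
  obtain c where c: "b = Suc c"
    using assms by (cases b) auto
  have "b ^ n \<noteq> 0"
    using assms by simp
  then obtain p where p: "b ^ n = Suc p"
    by (meson not0_implies_Suc)
  have "(b * b - 1) * b ^ Suc n = b * ((b * b - 1) * b ^ n)"
    by simp
  with Suc show ?case
    using legendre_sum_mult_base[OF assms] unfolding s_gen_def
    by (simp add: p, simp add: c algebra_simps)
qed

lemma sum_Least_legendre_sum:
  assumes "2 \<le> b"
  shows "real (\<Sum>j<s_gen b n 0. LEAST N. j \<le> legendre_sum b N)
    = real ((b * b - 1) * b ^ n) * (real (s_gen b n 0) - 1) - real (\<Sum>N<(b * b - 1) * b ^ n. legendre_sum b N)"
proof -
  define M K where "M = s_gen b n 0" and "K = (b * b - 1) * b ^ n"
  have top: "Suc (legendre_sum b K) = M"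
    unfolding M_def K_def by (rule Suc_legendre_sum_eq_s_gen_0[OF assms])
  have "(\<Sum>j<M. LEAST N. j \<le> legendre_sum b N) = (\<Sum>N<K. M - Suc (legendre_sum b N))"
    using mono_legendre_sum[OF assms] top by (intro sum_Least_le_mono) simp_all
  moreover have "real (M - Suc (legendre_sum b N)) = real M - 1 - real (legendre_sum b N)" if "N < K" for N
    using monoD[OF mono_legendre_sum[OF assms], of N K] that top by (simp add: of_nat_diff)
  ultimately show ?thesis
    unfolding M_def[symmetric] K_def[symmetric] by (simp add: sum_subtractf)
qed

lemma sum_div_s_gen_0:
  assumes "2 \<le> b"
  shows "2 * real (\<Sum>j<s_gen b n 0. (b - 1) * j div s_gen b n 0) = (real (s_gen b n 0) - 1) * (real b - 2)"
proof -
  have "2 * (\<Sum>j<s_gen b n 0. (b - 1) * j div s_gen b n 0) = (s_gen b n 0 - 1) * (b - 2)"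
    using sum_div_coprime[OF coprime_pred_base_s_gen[OF assms]] by (simp add: numeral_2_eq_2)
  then have "real (2 * (\<Sum>j<s_gen b n 0. (b - 1) * j div s_gen b n 0)) = real ((s_gen b n 0 - 1) * (b - 2))"
    by (rule arg_cong)
  then show ?thesis
    using s_gen_ge_2[OF assms, of n] assms by (simp add: of_nat_diff)
qed

lemma double_sum_lessThan_id: "2 * (\<Sum>q<Q. q) = Q * (Q - 1 :: nat)"
proof (induction Q)
  case (Suc Q)
  then show ?case
    by (cases Q) (simp_all add: algebra_simps)
qed simp

lemma sum_legendre_sum_mult_base:
  assumes "2 \<le> b"
  shows "2 * (\<Sum>N<b * Q. legendre_sum b N) = b * (Q * (Q - 1)) + 2 * b * (\<Sum>N<Q. legendre_sum b N)"
proof -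
  have "(\<Sum>N<Q * b. legendre_sum b N) = (\<Sum>q<Q. \<Sum>N\<in>{q * b..<q * b + b}. legendre_sum b N)"
    by (rule sum.nat_group[symmetric])
  also have "\<dots> = (\<Sum>q<Q. b * (q + legendre_sum b q))"
  proof (rule sum.cong)
    fix q
    have "legendre_sum b N = q + legendre_sum b q" if "N \<in> {q * b..<q * b + b}" for N
    proof -
      from that assms have "N div b = q"
        by (intro div_nat_eqI) (auto simp: mult.commute)
      then show ?thesis
        using legendre_sum_rec[OF assms, of N] by simp
    qed
    then show "(\<Sum>N\<in>{q * b..<q * b + b}. legendre_sum b N) = b * (q + legendre_sum b q)"
      by simp
  qed simp
  also have "\<dots> = b * (\<Sum>q<Q. q) + b * (\<Sum>N<Q. legendre_sum b N)"
    by (simp add: sum_distrib_left sum.distrib distrib_left)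
  finally have "(\<Sum>N<b * Q. legendre_sum b N) = b * (\<Sum>q<Q. q) + b * (\<Sum>N<Q. legendre_sum b N)"
    by (simp add: mult.commute)
  then have "2 * (\<Sum>N<b * Q. legendre_sum b N) = b * (2 * (\<Sum>q<Q. q)) + 2 * b * (\<Sum>N<Q. legendre_sum b N)"
    by simp
  then show ?thesis
    unfolding double_sum_lessThan_id .
qed

lemma of_nat_s_gen_0:
  assumes "0 < b"
  shows "real (s_gen b n 0) = (real b + 1) * real b ^ n - 1"
proof -
  have "1 \<le> (b + 1) * b ^ n"
    using assms by (simp add: Suc_le_eq)
  then show ?thesis
    unfolding s_gen_def by (simp add: of_nat_diff algebra_simps)
qed

lemma of_nat_pred_square_mult_power:
  assumes "0 < b"
  shows "real ((b * b - 1) * b ^ n) = (real b ^ 2 - 1) * real b ^ n"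
  using assms by (simp add: of_nat_diff power2_eq_square)

lemma sum_legendre_sum_closed_form:
  assumes "2 \<le> b"
  shows "2 * real (\<Sum>N<(b * b - 1) * b ^ n. legendre_sum b N)
    = real b ^ n * (real b - 1) * (real b ^ 2 - 2)
      + (real b + 1) * (real b ^ 2 - 1) * real b ^ n * (real b ^ n - 1)
      - (real b ^ 2 - 1) * real n * real b ^ n"
proof (induction n)
  case 0
  have "b * b = Suc (b * b - 1)"
    using assms by simp
  then have "(\<Sum>N<b * b. legendre_sum b N) = (\<Sum>N<b * b - 1. legendre_sum b N) + legendre_sum b (b * b - 1)"
    by (metis sum.lessThan_Suc)
  moreover have "legendre_sum b (b * b - 1) = b - 1"
    using Suc_legendre_sum_eq_s_gen_0[OF assms, of 0] by (simp add: s_gen_def)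
  moreover have "(\<Sum>N<b. legendre_sum b N) = 0"
    using legendre_sum_less_base[OF assms] by simp
  ultimately have "2 * (\<Sum>N<b * b - 1. legendre_sum b N) + 2 * (b - 1) = b * (b * (b - 1))"
    using sum_legendre_sum_mult_base[OF assms, of b] by simp
  then have "real (2 * (\<Sum>N<b * b - 1. legendre_sum b N) + 2 * (b - 1)) = real (b * (b * (b - 1)))"
    by (rule arg_cong)
  then show ?case
    using assms by (simp add: of_nat_diff algebra_simps power2_eq_square)
next
  case (Suc n)
  define K where "K = (b * b - 1) * b ^ n"
  have "(b * b - 1) * b ^ Suc n = b * K"
    unfolding K_def by simp
  have "2 * (\<Sum>N<(b * b - 1) * b ^ Suc n. legendre_sum b N)
      = b * (K * (K - 1)) + 2 * b * (\<Sum>N<K. legendre_sum b N)"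
    unfolding \<open>(b * b - 1) * b ^ Suc n = b * K\<close> by (rule sum_legendre_sum_mult_base[OF assms])
  then have "real (2 * (\<Sum>N<(b * b - 1) * b ^ Suc n. legendre_sum b N))
      = real (b * (K * (K - 1)) + 2 * b * (\<Sum>N<K. legendre_sum b N))"
    by (rule arg_cong)
  moreover have "real (K * (K - 1)) = real K * (real K - 1)"
    by (cases K) (simp_all add: algebra_simps)
  ultimately have step: "2 * real (\<Sum>N<(b * b - 1) * b ^ Suc n. legendre_sum b N)
      = real b * (real K * (real K - 1)) + real b * (2 * real (\<Sum>N<K. legendre_sum b N))"
    by (simp only: of_nat_add of_nat_mult of_nat_numeral mult.assoc)
  have K: "real K = (real b ^ 2 - 1) * real b ^ n"
    unfolding K_def using assms by (intro of_nat_pred_square_mult_power) simp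
  show ?case
    unfolding step Suc[folded K_def] K by (simp add: algebra_simps power2_eq_square)
qed

theorem mainTheorem2:
  fixes b n :: nat
  assumes "b \<ge> 2"
  shows "real (genus (T b n)) =
    ((real b ^ 3 + real b ^ 2 - real b - 1) * real b ^ (2 * n)
     + ((real n - 1) * (real b ^ 2 - 1) - 2) * real b ^ n - 2 * real b + 4) / 2"
proof -
  define M K where "M = s_gen b n 0" and "K = (b * b - 1) * b ^ n"
  define L F H where "L = (\<Sum>j<M. LEAST N. j \<le> legendre_sum b N)"
    and "F = (\<Sum>j<M. (b - 1) * j div M)" and "H = (\<Sum>N<K. legendre_sum b N)"
  have "real (genus (T b n)) = real L + real F"
    using genus_T_eq_sum[OF assms] unfolding L_def F_def M_def by simp
  moreover have "real L = real K * (real M - 1) - real H"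
    unfolding L_def H_def M_def K_def by (rule sum_Least_legendre_sum[OF assms])
  moreover have "real F = (real M - 1) * (real b - 2) / 2"
    using sum_div_s_gen_0[OF assms, of n] unfolding F_def M_def by simp
  moreover have "real H = (real b ^ n * (real b - 1) * (real b ^ 2 - 2)
      + (real b + 1) * (real b ^ 2 - 1) * real b ^ n * (real b ^ n - 1) - (real b ^ 2 - 1) * real n * real b ^ n) / 2"
    using sum_legendre_sum_closed_form[OF assms, of n] unfolding H_def K_def by simp
  moreover have "real M = (real b + 1) * real b ^ n - 1" "real K = (real b ^ 2 - 1) * real b ^ n"
    using assms unfolding M_def K_def by (simp_all add: of_nat_s_gen_0 of_nat_pred_square_mult_power power2_eq_square)
  ultimately show ?thesis
    by (simp only:) (simp add: field_simps power_mult power2_eq_square power3_eq_cube)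
qed

end
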